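(* Let $n\ge 2$ be an integer. Then there is a one-to-one correspondence (bijection) between the set $\Sigma_{n^2}$ of all $n^2\times n^2$ S-permutation matrices and the set $\Pi_n$.
   Context: A binary matrix is a matrix with all entries in $\{0,1\}$. For $[n]=\{1,\dots,n\}$, an $n^2\times n^2$ binary matrix $A$ is partitioned by $n-1$ horizontal and $n-1$ vertical lines into $n^2$ non-intersecting $n\times n$ submatrices (blocks) $A_{kl}$, $1\le k,l\le n$, so that $A=[A_{kl}]_{k,l=1}^n$. $A$ is an S-permutation matrix if each row, each column and each block of $A$ contains exactly one entry equal to $1$; $\Sigma_{n^2}$ denotes the set of all $n^2\times n^2$ S-permutation matrices. $\Pi_n$ is the set of all $n\times n$ matrices $\pi$ whose entries are ordered pairs $\langle i,j\rangle$ with $1\le i,j\le n$, such that: for every row $[\langle a_1,b_1\rangle,\dots,\langle a_n,b_n\rangle]$ of $\pi$, the sequence $a_1,\dots,a_n$ is a permutation of $[n]$; and for every column $(\langle a_1,b_1\rangle,\dots,\langle a_n,b_n\rangle)^T$ of $\pi$, the sequence $b_1,\dots,b_n$ is a permutation of $[n]$. *)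

theory Defs
  imports "HOL-Library.FuncSet"
begin

definition block_idx :: "nat \<Rightarrow> nat \<Rightarrow> nat set" where
  "block_idx n k = {(k - 1) * n + 1 .. k * n}"

definition S_perm_matrices :: "nat \<Rightarrow> (nat \<times> nat \<Rightarrow> nat) set" where
  "S_perm_matrices n =
     {A. A \<in> ({1..n^2} \<times> {1..n^2}) \<rightarrow>\<^sub>E {0, 1}
       \<and> (\<forall>i\<in>{1..n^2}. \<exists>!j. j \<in> {1..n^2} \<and> A (i, j) = 1)
       \<and> (\<forall>j\<in>{1..n^2}. \<exists>!i. i \<in> {1..n^2} \<and> A (i, j) = 1)
       \<and> (\<forall>k\<in>{1..n}. \<forall>l\<in>{1..n}.
             \<exists>!p. p \<in> block_idx n k \<times> block_idx n l \<and> A p = 1)}"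

definition Pi_matrices :: "nat \<Rightarrow> (nat \<times> nat \<Rightarrow> nat \<times> nat) set" where
  "Pi_matrices n =
     {\<pi>. \<pi> \<in> ({1..n} \<times> {1..n}) \<rightarrow>\<^sub>E ({1..n} \<times> {1..n})
       \<and> (\<forall>r\<in>{1..n}. bij_betw (\<lambda>c. fst (\<pi> (r, c))) {1..n} {1..n})
       \<and> (\<forall>c\<in>{1..n}. bij_betw (\<lambda>r. snd (\<pi> (r, c))) {1..n} {1..n})}"

end

theory Submission
  imports Defs
begin

text \<open>Index the rows and columns of an \<open>n\<^sup>2 \<times> n\<^sup>2\<close> matrix by pairs (block, offset),
  \<open>i = (k - 1) n + a\<close>. The block condition says that block \<open>(k, l)\<close> contains exactly one
  entry 1, at offsets \<open>(a, b)\<close> say; recording \<open>\<pi>(k, l) = \<langle>a, b\<rangle>\<close> gives the bijection.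
  Under it, "row \<open>(k, a)\<close> contains exactly one 1" says that \<open>a\<close> occurs exactly once among the
  first components of row \<open>k\<close> of \<open>\<pi>\<close>, and dually for columns.\<close>

lemma bij_betw_iff_ex1:
  "bij_betw f A B \<longleftrightarrow> f \<in> A \<rightarrow> B \<and> (\<forall>y\<in>B. \<exists>!x. x \<in> A \<and> f x = y)"
  unfolding bij_betw_def inj_on_def by auto

lemma bij_betw_ball_transfer:
  assumes "bij_betw h A B" "\<And>x. x \<in> A \<Longrightarrow> P (h x) \<longleftrightarrow> Q x"
  shows "(\<forall>y\<in>B. P y) \<longleftrightarrow> (\<forall>x\<in>A. Q x)"
  using assms unfolding bij_betw_def by blast

lemma bij_betw_ex1_transfer:
  assumes "bij_betw h A B" "\<And>x. x \<in> A \<Longrightarrow> P (h x) \<longleftrightarrow> Q x"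
  shows "(\<exists>!y. y \<in> B \<and> P y) \<longleftrightarrow> (\<exists>!x. x \<in> A \<and> Q x)"
  using assms unfolding bij_betw_def inj_on_def by blast

lemma ex1_pair_iff_ex1_fst:
  assumes "\<And>l. l \<in> L \<Longrightarrow> snd (f l) \<in> B"
  shows "(\<exists>!p. p \<in> L \<times> B \<and> f (fst p) = (a, snd p)) \<longleftrightarrow> (\<exists>!l. l \<in> L \<and> fst (f l) = a)"
  using assms by (auto simp: prod_eq_iff) metis+

lemma ex1_pair_iff_ex1_snd:
  assumes "\<And>k. k \<in> K \<Longrightarrow> fst (f k) \<in> A"
  shows "(\<exists>!p. p \<in> K \<times> A \<and> f (fst p) = (snd p, b)) \<longleftrightarrow> (\<exists>!k. k \<in> K \<and> snd (f k) = b)"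
  using assms by (auto simp: prod_eq_iff) metis+

definition block_of :: "nat \<Rightarrow> nat \<Rightarrow> nat" where
  "block_of n i = (i - 1) div n + 1"

definition offset_in_block :: "nat \<Rightarrow> nat \<Rightarrow> nat" where
  "offset_in_block n i = (i - 1) mod n + 1"

definition global_index :: "nat \<Rightarrow> nat \<Rightarrow> nat \<Rightarrow> nat" where
  "global_index n k a = (k - 1) * n + a"

lemma global_index_bij_block:
  assumes "k \<ge> 1"
  shows "bij_betw (global_index n k) {1..n} (block_idx n k)"
proof -
  have "k * n = (k - 1) * n + n" using assms by (cases k) auto
  then show ?thesis
    unfolding block_idx_def global_index_def
    by (intro bij_betw_byWitness[where f' = "\<lambda>i. i - (k - 1) * n"]) auto
qed

lemma global_index_inverse:
  assumes "k \<ge> 1" "a \<in> {1..n}"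
  shows "block_of n (global_index n k a) = k" "offset_in_block n (global_index n k a) = a"
proof -
  have index: "global_index n k a - 1 = (a - 1) + (k - 1) * n" and "a - 1 < n"
    using assms unfolding global_index_def by auto
  then have quotient: "((a - 1) + (k - 1) * n) div n = k - 1"
    and remainder: "((a - 1) + (k - 1) * n) mod n = a - 1"
    by simp_all
  show "block_of n (global_index n k a) = k" "offset_in_block n (global_index n k a) = a"
    unfolding block_of_def offset_in_block_def index quotient remainder using assms by auto
qed

lemma global_index_in_range:
  assumes "k \<in> {1..n}" "a \<in> {1..n}"
  shows "global_index n k a \<in> {1..n^2}"
proof -
  have "(k - 1) * n + a \<le> (n - 1) * n + n"
    using assms by (intro add_mono mult_le_mono1) auto
  also have "\<dots> = n^2" using assms by (cases n) (auto simp: power2_eq_square)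
  finally show ?thesis using assms unfolding global_index_def by auto
qed

lemma block_of_in_range:
  assumes "i \<in> {1..n^2}"
  shows "block_of n i \<in> {1..n}" "offset_in_block n i \<in> {1..n}"
proof -
  have "n > 0" "i - 1 < n * n" using assms by (auto simp: power2_eq_square intro: Nat.gr0I)
  then have "(i - 1) div n < n" "(i - 1) mod n < n" by (simp_all add: div_less_iff_less_mult)
  with \<open>n > 0\<close> show "block_of n i \<in> {1..n}" "offset_in_block n i \<in> {1..n}"
    unfolding block_of_def offset_in_block_def by (auto simp: Suc_le_eq)
qed

lemma global_index_bij:
  "bij_betw (\<lambda>(k, a). global_index n k a) ({1..n} \<times> {1..n}) {1..n^2}"
proof (rule bij_betw_byWitness[where f' = "\<lambda>i. (block_of n i, offset_in_block n i)"])
  show "\<forall>i\<in>{1..n^2}. (case (block_of n i, offset_in_block n i) of (k, a) \<Rightarrow> global_index n k a) = i"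
    unfolding block_of_def offset_in_block_def global_index_def by (simp add: add.commute)
qed (use global_index_inverse global_index_in_range block_of_in_range in fastforce)+

lemma ball_global_index_transfer:
  assumes "\<And>k a. k \<in> {1..n} \<Longrightarrow> a \<in> {1..n} \<Longrightarrow> P (global_index n k a) \<longleftrightarrow> Q k a"
  shows "(\<forall>i\<in>{1..n^2}. P i) \<longleftrightarrow> (\<forall>k\<in>{1..n}. \<forall>a\<in>{1..n}. Q k a)"
proof -
  have "(\<forall>i\<in>{1..n^2}. P i) \<longleftrightarrow> (\<forall>p\<in>{1..n} \<times> {1..n}. Q (fst p) (snd p))"
    using assms by (intro bij_betw_ball_transfer[OF global_index_bij]) auto
  then show ?thesis by (simp add: split_paired_Ball_Sigma)
qed

lemma ex1_global_index_transfer: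
  assumes "\<And>k a. k \<in> {1..n} \<Longrightarrow> a \<in> {1..n} \<Longrightarrow> P (global_index n k a) \<longleftrightarrow> Q k a"
  shows "(\<exists>!i. i \<in> {1..n^2} \<and> P i) \<longleftrightarrow> (\<exists>!p. p \<in> {1..n} \<times> {1..n} \<and> Q (fst p) (snd p))"
  using assms by (intro bij_betw_ex1_transfer[OF global_index_bij]) auto

definition S_matrix_of :: "nat \<Rightarrow> (nat \<times> nat \<Rightarrow> nat \<times> nat) \<Rightarrow> nat \<times> nat \<Rightarrow> nat" where
  "S_matrix_of n \<pi> = restrict (\<lambda>(i, j).
     if \<pi> (block_of n i, block_of n j) = (offset_in_block n i, offset_in_block n j) then 1 else 0)
     ({1..n^2} \<times> {1..n^2})"

lemma S_matrix_of_PiE: "S_matrix_of n \<pi> \<in> ({1..n^2} \<times> {1..n^2}) \<rightarrow>\<^sub>E {0, 1}"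
  unfolding S_matrix_of_def by (auto split: if_splits)

lemma S_matrix_of_global_index:
  assumes "k \<in> {1..n}" "a \<in> {1..n}" "l \<in> {1..n}" "b \<in> {1..n}"
  shows "S_matrix_of n \<pi> (global_index n k a, global_index n l b) = 1 \<longleftrightarrow> \<pi> (k, l) = (a, b)"
proof -
  have "global_index n k a \<in> {1..n^2}" "global_index n l b \<in> {1..n^2}"
    using assms by (simp_all only: global_index_in_range)
  moreover have "k \<ge> 1" "l \<ge> 1" using assms by simp_all
  ultimately show ?thesis
    using assms by (simp add: S_matrix_of_def global_index_inverse)
qed

lemma S_matrix_of_block_entry:
  assumes "k \<in> {1..n}" "l \<in> {1..n}" "q \<in> {1..n} \<times> {1..n}"
  shows "S_matrix_of n \<pi> (global_index n k (fst q), global_index n l (snd q)) = 1 \<longleftrightarrow> \<pi> (k, l) = q"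
proof -
  obtain a b where q: "q = (a, b)" and ab: "a \<in> {1..n}" "b \<in> {1..n}" using assms(3) by blast
  show ?thesis unfolding q fst_conv snd_conv by (rule S_matrix_of_global_index[OF assms(1) ab(1) assms(2) ab(2)])
qed

lemma S_matrix_of_rows_iff:
  assumes "\<pi> \<in> ({1..n} \<times> {1..n}) \<rightarrow>\<^sub>E ({1..n} \<times> {1..n})"
  shows "(\<forall>i\<in>{1..n^2}. \<exists>!j. j \<in> {1..n^2} \<and> S_matrix_of n \<pi> (i, j) = 1)
     \<longleftrightarrow> (\<forall>k\<in>{1..n}. bij_betw (\<lambda>l. fst (\<pi> (k, l))) {1..n} {1..n})"
proof -
  have range: "\<pi> (k, l) \<in> {1..n} \<times> {1..n}" if "k \<in> {1..n}" "l \<in> {1..n}" for k l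
    using PiE_mem[OF assms] that by blast
  have row_iff: "(\<exists>!j. j \<in> {1..n^2} \<and> S_matrix_of n \<pi> (global_index n k a, j) = 1)
      \<longleftrightarrow> (\<exists>!l. l \<in> {1..n} \<and> fst (\<pi> (k, l)) = a)"
    if "k \<in> {1..n}" "a \<in> {1..n}" for k a
  proof -
    have "(\<exists>!j. j \<in> {1..n^2} \<and> S_matrix_of n \<pi> (global_index n k a, j) = 1)
        \<longleftrightarrow> (\<exists>!p. p \<in> {1..n} \<times> {1..n} \<and> \<pi> (k, fst p) = (a, snd p))"
      by (rule ex1_global_index_transfer) (rule S_matrix_of_global_index[OF that])
    also have "\<dots> \<longleftrightarrow> (\<exists>!l. l \<in> {1..n} \<and> fst (\<pi> (k, l)) = a)"
      by (rule ex1_pair_iff_ex1_fst) (use range[OF that(1)] in \<open>simp add: mem_Times_iff\<close>)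
    finally show ?thesis .
  qed
  have maps: "(\<lambda>l. fst (\<pi> (k, l))) \<in> {1..n} \<rightarrow> {1..n}" if "k \<in> {1..n}" for k
    using range[OF that] by (auto simp: mem_Times_iff)
  have "(\<forall>i\<in>{1..n^2}. \<exists>!j. j \<in> {1..n^2} \<and> S_matrix_of n \<pi> (i, j) = 1)
      \<longleftrightarrow> (\<forall>k\<in>{1..n}. \<forall>a\<in>{1..n}. \<exists>!l. l \<in> {1..n} \<and> fst (\<pi> (k, l)) = a)"
    by (rule ball_global_index_transfer) (rule row_iff)
  also have "\<dots> \<longleftrightarrow> (\<forall>k\<in>{1..n}. bij_betw (\<lambda>l. fst (\<pi> (k, l))) {1..n} {1..n})"
    by (intro ball_cong refl) (use maps in \<open>simp add: bij_betw_iff_ex1\<close>)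
  finally show ?thesis .
qed

lemma S_matrix_of_cols_iff:
  assumes "\<pi> \<in> ({1..n} \<times> {1..n}) \<rightarrow>\<^sub>E ({1..n} \<times> {1..n})"
  shows "(\<forall>j\<in>{1..n^2}. \<exists>!i. i \<in> {1..n^2} \<and> S_matrix_of n \<pi> (i, j) = 1)
     \<longleftrightarrow> (\<forall>l\<in>{1..n}. bij_betw (\<lambda>k. snd (\<pi> (k, l))) {1..n} {1..n})"
proof -
  have range: "\<pi> (k, l) \<in> {1..n} \<times> {1..n}" if "k \<in> {1..n}" "l \<in> {1..n}" for k l
    using PiE_mem[OF assms] that by blast
  have col_iff: "(\<exists>!i. i \<in> {1..n^2} \<and> S_matrix_of n \<pi> (i, global_index n l b) = 1)
      \<longleftrightarrow> (\<exists>!k. k \<in> {1..n} \<and> snd (\<pi> (k, l)) = b)"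
    if "l \<in> {1..n}" "b \<in> {1..n}" for l b
  proof -
    have "(\<exists>!i. i \<in> {1..n^2} \<and> S_matrix_of n \<pi> (i, global_index n l b) = 1)
        \<longleftrightarrow> (\<exists>!p. p \<in> {1..n} \<times> {1..n} \<and> \<pi> (fst p, l) = (snd p, b))"
      by (rule ex1_global_index_transfer) (rule S_matrix_of_global_index[OF _ _ that])
    also have "\<dots> \<longleftrightarrow> (\<exists>!k. k \<in> {1..n} \<and> snd (\<pi> (k, l)) = b)"
      by (rule ex1_pair_iff_ex1_snd) (use range[OF _ that(1)] in \<open>simp add: mem_Times_iff\<close>)
    finally show ?thesis .
  qed
  have maps: "(\<lambda>k. snd (\<pi> (k, l))) \<in> {1..n} \<rightarrow> {1..n}" if "l \<in> {1..n}" for l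
    using range[OF _ that] by (auto simp: mem_Times_iff)
  have "(\<forall>j\<in>{1..n^2}. \<exists>!i. i \<in> {1..n^2} \<and> S_matrix_of n \<pi> (i, j) = 1)
      \<longleftrightarrow> (\<forall>l\<in>{1..n}. \<forall>b\<in>{1..n}. \<exists>!k. k \<in> {1..n} \<and> snd (\<pi> (k, l)) = b)"
    by (rule ball_global_index_transfer) (rule col_iff)
  also have "\<dots> \<longleftrightarrow> (\<forall>l\<in>{1..n}. bij_betw (\<lambda>k. snd (\<pi> (k, l))) {1..n} {1..n})"
    by (intro ball_cong refl) (use maps in \<open>simp add: bij_betw_iff_ex1\<close>)
  finally show ?thesis .
qed

lemma ex1_in_block_iff:
  assumes "k \<in> {1..n}" "l \<in> {1..n}"
  shows "(\<exists>!p. p \<in> block_idx n k \<times> block_idx n l \<and> A p = 1)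
     \<longleftrightarrow> (\<exists>!q. q \<in> {1..n} \<times> {1..n} \<and> A (global_index n k (fst q), global_index n l (snd q)) = 1)"
  using assms
  by (intro bij_betw_ex1_transfer[OF bij_betw_map_prod[OF global_index_bij_block global_index_bij_block]])
    (auto simp: map_prod_def split_beta)

lemma S_matrix_of_blocks:
  assumes "\<pi> \<in> ({1..n} \<times> {1..n}) \<rightarrow>\<^sub>E ({1..n} \<times> {1..n})" "k \<in> {1..n}" "l \<in> {1..n}"
  shows "\<exists>!p. p \<in> block_idx n k \<times> block_idx n l \<and> S_matrix_of n \<pi> p = 1"
proof -
  have range: "\<pi> (k, l) \<in> {1..n} \<times> {1..n}"
    using PiE_mem[OF assms(1)] assms(2,3) by simp
  show ?thesis
    unfolding ex1_in_block_iff[OF assms(2,3)]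
  proof (rule ex1I[of _ "\<pi> (k, l)"])
    fix q
    assume "q \<in> {1..n} \<times> {1..n} \<and>
      S_matrix_of n \<pi> (global_index n k (fst q), global_index n l (snd q)) = 1"
    then show "q = \<pi> (k, l)" using S_matrix_of_block_entry[OF assms(2,3), of q] by simp
  qed (use range S_matrix_of_block_entry[OF assms(2,3) range] in blast)
qed

lemma S_matrix_of_in_S_perm_matrices_iff:
  assumes "\<pi> \<in> ({1..n} \<times> {1..n}) \<rightarrow>\<^sub>E ({1..n} \<times> {1..n})"
  shows "S_matrix_of n \<pi> \<in> S_perm_matrices n \<longleftrightarrow> \<pi> \<in> Pi_matrices n"
proof -
  have "\<forall>k\<in>{1..n}. \<forall>l\<in>{1..n}. \<exists>!p. p \<in> block_idx n k \<times> block_idx n l \<and> S_matrix_of n \<pi> p = 1"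
    using S_matrix_of_blocks[OF assms] by blast
  then show ?thesis
    unfolding S_perm_matrices_def Pi_matrices_def mem_Collect_eq
      S_matrix_of_rows_iff[OF assms] S_matrix_of_cols_iff[OF assms]
    using S_matrix_of_PiE assms by simp
qed

lemma inj_on_S_matrix_of: "inj_on (S_matrix_of n) (({1..n} \<times> {1..n}) \<rightarrow>\<^sub>E ({1..n} \<times> {1..n}))"
proof (rule inj_onI)
  fix \<pi> \<rho>
  assume \<pi>: "\<pi> \<in> ({1..n} \<times> {1..n}) \<rightarrow>\<^sub>E ({1..n} \<times> {1..n})"
    and \<rho>: "\<rho> \<in> ({1..n} \<times> {1..n}) \<rightarrow>\<^sub>E ({1..n} \<times> {1..n})"
    and eq: "S_matrix_of n \<pi> = S_matrix_of n \<rho>"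
  show "\<pi> = \<rho>"
  proof (rule PiE_ext[OF \<pi> \<rho>])
    fix x assume "x \<in> {1..n} \<times> {1..n}"
    then obtain k l where x: "x = (k, l)" "k \<in> {1..n}" "l \<in> {1..n}" by blast
    have "\<pi> x \<in> {1..n} \<times> {1..n}" using PiE_mem[OF \<pi>] \<open>x \<in> {1..n} \<times> {1..n}\<close> .
    then show "\<pi> x = \<rho> x"
      using S_matrix_of_block_entry[OF x(2,3), of "\<pi> x" \<pi>] S_matrix_of_block_entry[OF x(2,3), of "\<pi> x" \<rho>]
      unfolding eq x by simp
  qed
qed

lemma binary_matrix_eqI:
  assumes "A \<in> X \<rightarrow>\<^sub>E {0, 1}" "B \<in> X \<rightarrow>\<^sub>E {0, 1}" "\<And>x. x \<in> X \<Longrightarrow> A x = 1 \<longleftrightarrow> B x = 1"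
  shows "A = B"
proof (rule PiE_ext[OF assms(1,2)])
  fix x assume "x \<in> X"
  then have "A x \<in> {0, 1}" "B x \<in> {0, 1}"
    using PiE_mem[OF assms(1)] PiE_mem[OF assms(2)] by blast+
  then show "A x = B x" using assms(3)[OF \<open>x \<in> X\<close>] by auto
qed

lemma global_index_cases:
  assumes "i \<in> {1..n^2}"
  obtains k a where "k \<in> {1..n}" "a \<in> {1..n}" "i = global_index n k a"
proof -
  have "i \<in> (\<lambda>(k, a). global_index n k a) ` ({1..n} \<times> {1..n})"
    unfolding bij_betw_imp_surj_on[OF global_index_bij] by (fact assms)
  then obtain k a where "k \<in> {1..n}" "a \<in> {1..n}" "i = global_index n k a" by auto
  then show thesis by (rule that)
qed

lemma S_perm_matrix_is_S_matrix_of: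
  assumes "A \<in> S_perm_matrices n"
  obtains \<pi> where "\<pi> \<in> ({1..n} \<times> {1..n}) \<rightarrow>\<^sub>E ({1..n} \<times> {1..n})" "A = S_matrix_of n \<pi>"
proof -
  have binary: "A \<in> ({1..n^2} \<times> {1..n^2}) \<rightarrow>\<^sub>E {0, 1}"
    using assms unfolding S_perm_matrices_def mem_Collect_eq by (elim conjE) assumption
  have blocks: "\<forall>k\<in>{1..n}. \<forall>l\<in>{1..n}. \<exists>!p. p \<in> block_idx n k \<times> block_idx n l \<and> A p = 1"
    using assms unfolding S_perm_matrices_def mem_Collect_eq by (elim conjE) assumption
  define P where "P k l q \<longleftrightarrow> q \<in> {1..n} \<times> {1..n} \<and> A (global_index n k (fst q), global_index n l (snd q)) = 1"
    for k l q
  have unique: "\<exists>!q. P k l q" if "k \<in> {1..n}" "l \<in> {1..n}" for k l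
  proof -
    have "\<exists>!p. p \<in> block_idx n k \<times> block_idx n l \<and> A p = 1"
      using bspec[OF bspec[OF blocks that(1)] that(2)] .
    then show ?thesis unfolding P_def ex1_in_block_iff[OF that] .
  qed
  define \<pi> where "\<pi> = restrict (\<lambda>(k, l). THE q. P k l q) ({1..n} \<times> {1..n})"
  have \<pi>_iff: "P k l q \<longleftrightarrow> \<pi> (k, l) = q" if "k \<in> {1..n}" "l \<in> {1..n}" for k l q
  proof -
    have "(THE q. P k l q) = q \<longleftrightarrow> P k l q"
      using theI'[OF unique[OF that]] the1_equality[OF unique[OF that]] by blast
    then show ?thesis using that unfolding \<pi>_def by simp
  qed
  have \<pi>_range: "\<pi> (k, l) \<in> {1..n} \<times> {1..n}" if "k \<in> {1..n}" "l \<in> {1..n}" for k l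
    using \<pi>_iff[OF that, of "\<pi> (k, l)"] unfolding P_def by blast
  have \<pi>_PiE: "\<pi> \<in> ({1..n} \<times> {1..n}) \<rightarrow>\<^sub>E ({1..n} \<times> {1..n})"
    unfolding PiE_iff
  proof
    show "\<forall>x\<in>{1..n} \<times> {1..n}. \<pi> x \<in> {1..n} \<times> {1..n}" using \<pi>_range by blast
    show "\<pi> \<in> extensional ({1..n} \<times> {1..n})" unfolding \<pi>_def by (rule restrict_extensional)
  qed
  have "A = S_matrix_of n \<pi>"
  proof (rule binary_matrix_eqI[OF binary S_matrix_of_PiE])
    fix x assume "x \<in> {1..n^2} \<times> {1..n^2}"
    then obtain i j where ij: "x = (i, j)" "i \<in> {1..n^2}" "j \<in> {1..n^2}" by blast
    obtain k a where "k \<in> {1..n}" "a \<in> {1..n}" "i = global_index n k a"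
      using global_index_cases[OF ij(2)] .
    moreover obtain l b where "l \<in> {1..n}" "b \<in> {1..n}" "j = global_index n l b"
      using global_index_cases[OF ij(3)] .
    ultimately have kalb: "k \<in> {1..n}" "a \<in> {1..n}" "l \<in> {1..n}" "b \<in> {1..n}"
      and x: "x = (global_index n k a, global_index n l b)"
      using ij(1) by simp_all
    show "A x = 1 \<longleftrightarrow> S_matrix_of n \<pi> x = 1"
      using \<pi>_iff[OF kalb(1,3), of "(a, b)"] S_matrix_of_global_index[OF kalb]
      unfolding x P_def using kalb by simp
  qed
  with \<pi>_PiE that show ?thesis by blast
qed

theorem mainTheorem1:
  fixes n :: nat
  assumes "n \<ge> 2"
  shows "\<exists>f. bij_betw f (S_perm_matrices n) (Pi_matrices n)"
proof -
  \<comment> \<open>The correspondence works for every \<open>n\<close>.\<close>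
  have Pi_matrices_PiE: "Pi_matrices n \<subseteq> ({1..n} \<times> {1..n}) \<rightarrow>\<^sub>E ({1..n} \<times> {1..n})"
    unfolding Pi_matrices_def by blast
  have "S_matrix_of n ` Pi_matrices n = S_perm_matrices n"
  proof
    show "S_matrix_of n ` Pi_matrices n \<subseteq> S_perm_matrices n"
      using Pi_matrices_PiE S_matrix_of_in_S_perm_matrices_iff by blast
    show "S_perm_matrices n \<subseteq> S_matrix_of n ` Pi_matrices n"
    proof
      fix A assume A: "A \<in> S_perm_matrices n"
      then obtain \<pi> where \<pi>: "\<pi> \<in> ({1..n} \<times> {1..n}) \<rightarrow>\<^sub>E ({1..n} \<times> {1..n})"
        and A_eq: "A = S_matrix_of n \<pi>"
        by (rule S_perm_matrix_is_S_matrix_of)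
      have "\<pi> \<in> Pi_matrices n"
        using A unfolding A_eq S_matrix_of_in_S_perm_matrices_iff[OF \<pi>] .
      then show "A \<in> S_matrix_of n ` Pi_matrices n" unfolding A_eq by (rule imageI)
    qed
  qed
  then have "bij_betw (S_matrix_of n) (Pi_matrices n) (S_perm_matrices n)"
    using inj_on_subset[OF inj_on_S_matrix_of Pi_matrices_PiE] unfolding bij_betw_def by blast
  then show ?thesis
    using bij_betw_inv_into by blast
qed

end
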